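(* Let $X$ and $Z$ be real Banach spaces and $Y$ a closed subspace of $Z$ which has property-$(SU)$ in $Z$. Identify $(X\widehat{\otimes}_\pi Y)^*$ with $\mathcal{L}(X,Y^* )$ and $(X\widehat{\otimes}_\pi Z)^*$ with $\mathcal{L}(X,Z^* )$. Then every isometry $S\in\mathcal{L}(X,Y^* )$ has a unique norm-preserving extension to $X\widehat{\otimes}_\pi Z$, i.e. there is exactly one $T\in\mathcal{L}(X,Z^* )$ with $\|T\|=\|S\|$ and $(Tx)|_Y=Sx$ for all $x\in X$.
   Context: $X\widehat{\otimes}_\pi Y$ denotes the completed projective tensor product; its dual is identified with the space $\mathcal{L}(X,Y^* )$ of bounded linear operators via $S(x\otimes y)=(Sx)(y)$. Since $Y$ is an ideal in $Z$ (see below), $X\widehat{\otimes}_\pi Y$ is isometrically a subspace of $X\widehat{\otimes}_\pi Z$. $Y^\perp=\{z^*\in Z^*:z^*|_Y=0\}$. $Y$ has property-$(SU)$ in $Z$ if there is a bounded linear projection $P$ on $Z^*$ with range $Y^\perp$ such that, with $G=(I-P)(Z^* )$, for every $z^*=y^\#+y^\perp$ with $y^\#\in G$, $0\neq y^\perp\in Y^\perp$, one has $\|z^*\|>\|y^\#\|$; equivalently, every $y^*\in Y^*$ has a unique norm-preserving extension to $Z$ and there is a norm-one projection on $Z^*$ with kernel $Y^\perp$ (i.e. $Y$ is an ideal in $Z$). *)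

theory Defs
  imports "HOL-Analysis.Analysis"
begin

definition annihilator :: "'z::real_normed_vector set \<Rightarrow> ('z \<Rightarrow>\<^sub>L real) set" where
  "annihilator Y = {f. \<forall>y\<in>Y. blinfun_apply f y = 0}"

definition property_SU :: "'z::real_normed_vector set \<Rightarrow> bool" where
  "property_SU Y \<longleftrightarrow> (\<exists>P :: ('z \<Rightarrow>\<^sub>L real) \<Rightarrow>\<^sub>L ('z \<Rightarrow>\<^sub>L real).
     (\<forall>f. blinfun_apply P (blinfun_apply P f) = blinfun_apply P f) \<and> range (blinfun_apply P) = annihilator Y \<and>
     (\<forall>g \<in> range (\<lambda>f. f - blinfun_apply P f). \<forall>h \<in> annihilator Y. h \<noteq> 0 \<longrightarrow> norm (g + h) > norm g))"

text \<open>Elements of Y^* are represented by functions 'z => real whose restriction to Y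
  is linear and bounded; only the values on Y matter.\<close>
definition bounded_functional_on :: "'z::real_normed_vector set \<Rightarrow> ('z \<Rightarrow> real) \<Rightarrow> bool" where
  "bounded_functional_on Y f \<longleftrightarrow>
     (\<forall>a\<in>Y. \<forall>b\<in>Y. f (a + b) = f a + f b) \<and> (\<forall>c. \<forall>a\<in>Y. f (c *\<^sub>R a) = c * f a) \<and>
     (\<exists>K. \<forall>y\<in>Y. \<bar>f y\<bar> \<le> K * norm y)"

definition dual_norm_on :: "'z::real_normed_vector set \<Rightarrow> ('z \<Rightarrow> real) \<Rightarrow> real" where
  "dual_norm_on Y f = Sup ((\<lambda>y. \<bar>f y\<bar>) ` {y\<in>Y. norm y \<le> 1})"

definition bounded_op_to_dual_on ::
    "'z::real_normed_vector set \<Rightarrow> ('x::real_normed_vector \<Rightarrow> 'z \<Rightarrow> real) \<Rightarrow> bool" where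
  "bounded_op_to_dual_on Y S \<longleftrightarrow>
     (\<forall>x. bounded_functional_on Y (S x)) \<and>
     (\<forall>x1 x2. \<forall>y\<in>Y. S (x1 + x2) y = S x1 y + S x2 y) \<and>
     (\<forall>c x. \<forall>y\<in>Y. S (c *\<^sub>R x) y = c * S x y) \<and>
     (\<exists>K. \<forall>x. dual_norm_on Y (S x) \<le> K * norm x)"

definition op_norm_to_dual_on ::
    "'z::real_normed_vector set \<Rightarrow> ('x::real_normed_vector \<Rightarrow> 'z \<Rightarrow> real) \<Rightarrow> real" where
  "op_norm_to_dual_on Y S = Sup ((\<lambda>x. dual_norm_on Y (S x)) ` {x. norm x \<le> 1})"

end

(* Hahn-Banach gives every functional Sx a norm-preserving extension to Z, but an
   arbitrary choice of extensions need not depend linearly on x. The projection P of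
   property (SU) repairs this: Q = I - P kills Y^perp, does not change restrictions to Y,
   and strictly decreases the norm of every functional it moves. Applying Q to the chosen
   extensions therefore yields a linear T with norm (Tx) = norm (Sx) = norm x. Conversely a
   norm-preserving extension is fixed by Q, so it is determined by its restriction to Y;
   since an extension T' with norm T' = norm S <= 1 has norm-preserving values T'x, it
   equals T. *)

theory Submission
  imports Defs
begin

(* Partial linear functionals extending f from Y and dominated by p, encoded by their
   graphs; closure under sums and scalar multiples makes the domain a subspace. *)
definition dominated_extension_graphs ::
    "'a::real_vector set \<Rightarrow> ('a \<Rightarrow> real) \<Rightarrow> ('a \<Rightarrow> real) \<Rightarrow> ('a \<times> real) set set" where
  "dominated_extension_graphs Y f p = {G.
     (\<forall>x a b. (x, a) \<in> G \<longrightarrow> (x, b) \<in> G \<longrightarrow> a = b) \<and>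
     (\<forall>x a y b. (x, a) \<in> G \<longrightarrow> (y, b) \<in> G \<longrightarrow> (x + y, a + b) \<in> G) \<and>
     (\<forall>x a c. (x, a) \<in> G \<longrightarrow> (c *\<^sub>R x, c * a) \<in> G) \<and>
     (0, 0) \<in> G \<and> (\<forall>y\<in>Y. (y, f y) \<in> G) \<and> (\<forall>x a. (x, a) \<in> G \<longrightarrow> a \<le> p x)}"

lemma dominated_extension_graphsI:
  assumes "\<And>x a b. (x, a) \<in> G \<Longrightarrow> (x, b) \<in> G \<Longrightarrow> a = b"
    and "\<And>x a y b. (x, a) \<in> G \<Longrightarrow> (y, b) \<in> G \<Longrightarrow> (x + y, a + b) \<in> G"
    and "\<And>x a c. (x, a) \<in> G \<Longrightarrow> (c *\<^sub>R x, c * a) \<in> G"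
    and "(0, 0) \<in> G" and "\<And>y. y \<in> Y \<Longrightarrow> (y, f y) \<in> G"
    and "\<And>x a. (x, a) \<in> G \<Longrightarrow> a \<le> p x"
  shows "G \<in> dominated_extension_graphs Y f p"
  using assms unfolding dominated_extension_graphs_def by blast

lemma dominated_extension_graphsD:
  assumes "G \<in> dominated_extension_graphs Y f p"
  shows "(x, a) \<in> G \<Longrightarrow> (x, b) \<in> G \<Longrightarrow> a = b"
    and "(x, a) \<in> G \<Longrightarrow> (y, b) \<in> G \<Longrightarrow> (x + y, a + b) \<in> G"
    and "(x, a) \<in> G \<Longrightarrow> (c *\<^sub>R x, c * a) \<in> G"
    and "(0, 0) \<in> G" and "y \<in> Y \<Longrightarrow> (y, f y) \<in> G"
    and "(x, a) \<in> G \<Longrightarrow> a \<le> p x"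
  using assms unfolding dominated_extension_graphs_def by blast+

lemma Union_chain_dominated_extension_graphs:
  assumes "C \<noteq> {}" "subset.chain (dominated_extension_graphs Y f p) C"
  shows "\<Union>C \<in> dominated_extension_graphs Y f p"
proof -
  have C: "\<And>G. G \<in> C \<Longrightarrow> G \<in> dominated_extension_graphs Y f p"
    and cmp: "\<And>A B. A \<in> C \<Longrightarrow> B \<in> C \<Longrightarrow> A \<subseteq> B \<or> B \<subseteq> A"
    using assms(2) unfolding subset.chain_def by blast+
  have common: "\<exists>G\<in>C. u \<in> G \<and> v \<in> G" if "u \<in> \<Union>C" "v \<in> \<Union>C" for u v
    using that cmp by blast
  obtain G0 where "G0 \<in> C" using assms(1) by blast
  show ?thesis
  proof (rule dominated_extension_graphsI)
    fix x a b assume "(x, a) \<in> \<Union>C" "(x, b) \<in> \<Union>C"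
    then obtain G where "G \<in> C" "(x, a) \<in> G" "(x, b) \<in> G" using common by blast
    then show "a = b" using C dominated_extension_graphsD(1) by blast
  next
    fix x a y b assume "(x, a) \<in> \<Union>C" "(y, b) \<in> \<Union>C"
    then obtain G where "G \<in> C" "(x, a) \<in> G" "(y, b) \<in> G" using common by blast
    then show "(x + y, a + b) \<in> \<Union>C" using C dominated_extension_graphsD(2) by blast
  next
    fix x a c assume "(x, a) \<in> \<Union>C"
    then obtain G where "G \<in> C" "(x, a) \<in> G" by blast
    then show "(c *\<^sub>R x, c * a) \<in> \<Union>C" using C dominated_extension_graphsD(3) by blast
  next
    show "(0, 0) \<in> \<Union>C" using \<open>G0 \<in> C\<close> C dominated_extension_graphsD(4) by blast
  next
    fix y assume "y \<in> Y"
    then show "(y, f y) \<in> \<Union>C" using \<open>G0 \<in> C\<close> C dominated_extension_graphsD(5) by blast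
  next
    fix x a assume "(x, a) \<in> \<Union>C"
    then obtain G where "G \<in> C" "(x, a) \<in> G" by blast
    then show "a \<le> p x" using C dominated_extension_graphsD(6) by blast
  qed
qed

lemma dominated_extension_value_exists:
  assumes M: "M \<in> dominated_extension_graphs Y f p"
    and p_add: "\<And>x y. p (x + y) \<le> p x + p y"
  obtains c where "\<And>d a. (d, a) \<in> M \<Longrightarrow> a - p (d - x0) \<le> c"
    and "\<And>d a. (d, a) \<in> M \<Longrightarrow> c \<le> p (d + x0) - a"
proof -
  note zero = dominated_extension_graphsD(4)[OF M]
  have sandwich: "a1 - p (d1 - x0) \<le> p (d2 + x0) - a2"
    if "(d1, a1) \<in> M" "(d2, a2) \<in> M" for d1 a1 d2 a2
    using dominated_extension_graphsD(6)[OF M dominated_extension_graphsD(2)[OF M that]]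
      p_add[of "d1 - x0" "d2 + x0"]
    by simp
  define L where "L = (\<lambda>(d, a). a - p (d - x0)) ` M"
  have "bdd_above L"
    unfolding L_def using sandwich[OF _ zero] by (intro bdd_aboveI2[of _ _ "p x0"]) auto
  show thesis
  proof (rule that[of "Sup L"])
    show "a - p (d - x0) \<le> Sup L" if "(d, a) \<in> M" for d a
      using \<open>bdd_above L\<close> by (rule cSup_upper[rotated]) (use that in \<open>force simp: L_def\<close>)
    show "Sup L \<le> p (d + x0) - a" if "(d, a) \<in> M" for d a
      unfolding L_def using that zero sandwich by (intro cSup_least) auto
  qed
qed

lemma dominated_extension_value_bound:
  assumes M: "M \<in> dominated_extension_graphs Y f p"
    and p_scale: "\<And>t x. 0 < t \<Longrightarrow> p (t *\<^sub>R x) = t * p x"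
    and c_lo: "\<And>d a. (d, a) \<in> M \<Longrightarrow> a - p (d - x0) \<le> c"
    and c_hi: "\<And>d a. (d, a) \<in> M \<Longrightarrow> c \<le> p (d + x0) - a"
    and "(d, a) \<in> M"
  shows "a + t * c \<le> p (d + t *\<^sub>R x0)"
proof -
  note scl = dominated_extension_graphsD(3)[OF M \<open>(d, a) \<in> M\<close>]
  show ?thesis
  proof (cases t "0::real" rule: linorder_cases)
    case less
    then obtain s where s: "0 < s" "t = - s" by (metis neg_0_less_iff_less minus_minus)
    have "inverse s * a - p (inverse s *\<^sub>R d - x0) \<le> c"
      using c_lo[OF scl] .
    then have "s * (inverse s * a) - s * p (inverse s *\<^sub>R d - x0) \<le> s * c"
      using s by (simp add: mult_left_mono flip: right_diff_distrib)
    moreover have "s * p (inverse s *\<^sub>R d - x0) = p (d + t *\<^sub>R x0)"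
      using p_scale[OF s(1), of "inverse s *\<^sub>R d - x0"] s by (simp add: algebra_simps)
    moreover have "s * (inverse s * a) = a" "t * c = - (s * c)" using s by simp_all
    ultimately show ?thesis by linarith
  next
    case equal
    then show ?thesis using dominated_extension_graphsD(6)[OF M \<open>(d, a) \<in> M\<close>] by simp
  next
    case greater
    have "c \<le> p (inverse t *\<^sub>R d + x0) - inverse t * a"
      using c_hi[OF scl] .
    then have "t * c \<le> t * (p (inverse t *\<^sub>R d + x0) - inverse t * a)"
      using greater by (simp add: mult_left_mono)
    moreover have "t * p (inverse t *\<^sub>R d + x0) = p (d + t *\<^sub>R x0)"
      using p_scale[OF greater, of "inverse t *\<^sub>R d + x0"] greater by (simp add: algebra_simps)
    moreover have "t * (inverse t * a) = a" using greater by simp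
    ultimately show ?thesis by (simp add: right_diff_distrib)
  qed
qed

definition graph_extend :: "('a::real_vector \<times> real) set \<Rightarrow> 'a \<Rightarrow> real \<Rightarrow> ('a \<times> real) set" where
  "graph_extend M x0 c = {(d + t *\<^sub>R x0, a + t * c) | d a t. (d, a) \<in> M}"

lemma graph_extend_functional:
  assumes M: "M \<in> dominated_extension_graphs Y f p" and x0: "x0 \<notin> fst ` M"
    and "(x, a) \<in> graph_extend M x0 c" "(x, b) \<in> graph_extend M x0 c"
  shows "a = b"
proof -
  obtain d1 a1 t1 d2 a2 t2 where in_M: "(d1, a1) \<in> M" "(d2, a2) \<in> M"
    and x: "x = d1 + t1 *\<^sub>R x0" "x = d2 + t2 *\<^sub>R x0" and "a = a1 + t1 * c" "b = a2 + t2 * c"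
    using assms(3,4) unfolding graph_extend_def by blast
  have "t1 = t2"
  proof (rule ccontr)
    assume "t1 \<noteq> t2"
    have "(inverse (t1 - t2) *\<^sub>R (d2 - d1), inverse (t1 - t2) * (a2 - a1)) \<in> M"
      using dominated_extension_graphsD(2,3)[OF M] in_M by (metis scaleR_minus1_left add.commute
          diff_conv_add_uminus mult_minus1)
    moreover have "d2 - d1 = (t1 - t2) *\<^sub>R x0" using x by (simp add: algebra_simps)
    ultimately have "x0 \<in> fst ` M" using \<open>t1 \<noteq> t2\<close> by (force simp: image_iff)
    then show False using x0 by blast
  qed
  then have "d1 = d2" using x by simp
  then show ?thesis
    using \<open>t1 = t2\<close> dominated_extension_graphsD(1)[OF M] in_M \<open>a = _\<close> \<open>b = _\<close> by auto
qed

lemma graph_extend_in_dominated_extension_graphs: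
  assumes M: "M \<in> dominated_extension_graphs Y f p" and x0: "x0 \<notin> fst ` M"
    and bound: "\<And>d a t. (d, a) \<in> M \<Longrightarrow> a + t * c \<le> p (d + t *\<^sub>R x0)"
  shows "graph_extend M x0 c \<in> dominated_extension_graphs Y f p"
proof (rule dominated_extension_graphsI)
  fix x a b assume "(x, a) \<in> graph_extend M x0 c" "(x, b) \<in> graph_extend M x0 c"
  then show "a = b" by (rule graph_extend_functional[OF M x0])
next
  fix x a y b assume "(x, a) \<in> graph_extend M x0 c" "(y, b) \<in> graph_extend M x0 c"
  then obtain d1 a1 t1 d2 a2 t2 where "(d1, a1) \<in> M" "(d2, a2) \<in> M"
    "x = d1 + t1 *\<^sub>R x0" "a = a1 + t1 * c" "y = d2 + t2 *\<^sub>R x0" "b = a2 + t2 * c"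
    unfolding graph_extend_def by blast
  moreover have "x + y = (d1 + d2) + (t1 + t2) *\<^sub>R x0" "a + b = (a1 + a2) + (t1 + t2) * c"
    using calculation by (simp_all add: algebra_simps)
  ultimately show "(x + y, a + b) \<in> graph_extend M x0 c"
    unfolding graph_extend_def using dominated_extension_graphsD(2)[OF M] by blast
next
  fix x a r assume "(x, a) \<in> graph_extend M x0 c"
  then obtain d a' t where "(d, a') \<in> M" "x = d + t *\<^sub>R x0" "a = a' + t * c"
    unfolding graph_extend_def by blast
  moreover have "r *\<^sub>R x = r *\<^sub>R d + (r * t) *\<^sub>R x0" "r * a = r * a' + (r * t) * c"
    using calculation by (simp_all add: algebra_simps)
  ultimately show "(r *\<^sub>R x, r * a) \<in> graph_extend M x0 c"
    unfolding graph_extend_def using dominated_extension_graphsD(3)[OF M] by blast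
next
  have "(0 + 0 *\<^sub>R x0, 0 + 0 * c) \<in> graph_extend M x0 c"
    unfolding graph_extend_def using dominated_extension_graphsD(4)[OF M] by blast
  then show "(0, 0) \<in> graph_extend M x0 c" by simp
next
  fix y assume "y \<in> Y"
  then have "(y + 0 *\<^sub>R x0, f y + 0 * c) \<in> graph_extend M x0 c"
    unfolding graph_extend_def using dominated_extension_graphsD(5)[OF M] by blast
  then show "(y, f y) \<in> graph_extend M x0 c" by simp
next
  fix x a assume "(x, a) \<in> graph_extend M x0 c"
  then show "a \<le> p x" unfolding graph_extend_def using bound by blast
qed

lemma dominated_extension_graphs_extend:
  assumes M: "M \<in> dominated_extension_graphs Y f p"
    and p_add: "\<And>x y. p (x + y) \<le> p x + p y"
    and p_scale: "\<And>t x. 0 < t \<Longrightarrow> p (t *\<^sub>R x) = t * p x"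
    and x0: "x0 \<notin> fst ` M"
  shows "\<exists>G\<in>dominated_extension_graphs Y f p. M \<subset> G"
proof -
  obtain c where c_lo: "\<And>d a. (d, a) \<in> M \<Longrightarrow> a - p (d - x0) \<le> c"
    and c_hi: "\<And>d a. (d, a) \<in> M \<Longrightarrow> c \<le> p (d + x0) - a"
    using dominated_extension_value_exists[OF M p_add] by blast
  have "graph_extend M x0 c \<in> dominated_extension_graphs Y f p"
    using graph_extend_in_dominated_extension_graphs[OF M x0]
      dominated_extension_value_bound[OF M p_scale c_lo c_hi] by blast
  moreover have "M \<subseteq> graph_extend M x0 c"
  proof
    fix q assume "q \<in> M"
    then show "q \<in> graph_extend M x0 c" unfolding graph_extend_def by (cases q) force
  qed
  moreover have "(0 + 1 *\<^sub>R x0, 0 + 1 * c) \<in> graph_extend M x0 c"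
    unfolding graph_extend_def using dominated_extension_graphsD(4)[OF M] by blast
  then have "(x0, c) \<in> graph_extend M x0 c - M" using x0 by force
  ultimately show ?thesis by blast
qed

lemma graph_in_dominated_extension_graphs:
  assumes "subspace Y"
    and f_add: "\<And>a b. a \<in> Y \<Longrightarrow> b \<in> Y \<Longrightarrow> f (a + b) = f a + f b"
    and f_scale: "\<And>c a. a \<in> Y \<Longrightarrow> f (c *\<^sub>R a) = c * f a"
    and f_le: "\<And>y. y \<in> Y \<Longrightarrow> f y \<le> p y"
  shows "(\<lambda>y. (y, f y)) ` Y \<in> dominated_extension_graphs Y f p"
proof -
  have "0 \<in> Y" using \<open>subspace Y\<close> by (rule subspace_0)
  then have "f 0 = 0" using f_scale[of 0 0] by simp
  have graph_iff: "(x, a) \<in> (\<lambda>y. (y, f y)) ` Y \<longleftrightarrow> x \<in> Y \<and> a = f x" for x a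
    by auto
  show ?thesis
  proof (rule dominated_extension_graphsI)
    fix x a y b assume "(x, a) \<in> (\<lambda>y. (y, f y)) ` Y" "(y, b) \<in> (\<lambda>y. (y, f y)) ` Y"
    then show "(x + y, a + b) \<in> (\<lambda>y. (y, f y)) ` Y"
      using f_add subspace_add[OF \<open>subspace Y\<close>] by (simp add: graph_iff)
  next
    fix x a c assume "(x, a) \<in> (\<lambda>y. (y, f y)) ` Y"
    then show "(c *\<^sub>R x, c * a) \<in> (\<lambda>y. (y, f y)) ` Y"
      using f_scale subspace_scale[OF \<open>subspace Y\<close>] by (simp add: graph_iff)
  qed (use \<open>0 \<in> Y\<close> \<open>f 0 = 0\<close> f_le in \<open>auto simp: graph_iff\<close>)
qed

theorem hahn_banach_sublinear:
  fixes Y :: "'a::real_vector set" and f p :: "'a \<Rightarrow> real"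
  assumes "subspace Y"
    and f_add: "\<And>a b. a \<in> Y \<Longrightarrow> b \<in> Y \<Longrightarrow> f (a + b) = f a + f b"
    and f_scale: "\<And>c a. a \<in> Y \<Longrightarrow> f (c *\<^sub>R a) = c * f a"
    and f_le: "\<And>y. y \<in> Y \<Longrightarrow> f y \<le> p y"
    and p_add: "\<And>x y. p (x + y) \<le> p x + p y"
    and p_scale: "\<And>t x. 0 < t \<Longrightarrow> p (t *\<^sub>R x) = t * p x"
  shows "\<exists>F. linear F \<and> (\<forall>y\<in>Y. F y = f y) \<and> (\<forall>x. F x \<le> p x)"
proof -
  let ?A = "dominated_extension_graphs Y f p"
  have "?A \<noteq> {}" using graph_in_dominated_extension_graphs[OF assms(1-4)] by blast
  obtain M where M: "M \<in> ?A" and max: "\<forall>G\<in>?A. M \<subseteq> G \<longrightarrow> G = M"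
    using subset_Zorn_nonempty[OF \<open>?A \<noteq> {}\<close> Union_chain_dominated_extension_graphs] by blast
  have "\<exists>a. (x, a) \<in> M" for x
  proof (rule ccontr)
    assume "\<nexists>a. (x, a) \<in> M"
    then have "x \<notin> fst ` M" by force
    then obtain G where "G \<in> ?A" "M \<subset> G"
      using dominated_extension_graphs_extend[OF M p_add p_scale] by blast
    then show False using max by blast
  qed
  then obtain F where F: "\<And>x. (x, F x) \<in> M" by metis
  note fnc = dominated_extension_graphsD(1)[OF M]
  have "linear F"
  proof (rule linearI)
    show "F (x + y) = F x + F y" for x y using fnc[OF F dominated_extension_graphsD(2)[OF M F F]] .
    show "F (c *\<^sub>R x) = c *\<^sub>R F x" for c x using fnc[OF F dominated_extension_graphsD(3)[OF M F]] by simp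
  qed
  moreover have "\<forall>y\<in>Y. F y = f y" using fnc[OF F dominated_extension_graphsD(5)[OF M]] by blast
  moreover have "\<forall>x. F x \<le> p x" using dominated_extension_graphsD(6)[OF M F] by blast
  ultimately show ?thesis by blast
qed

lemma dual_norm_on_cong:
  assumes "\<And>y. y \<in> Y \<Longrightarrow> g y = h y"
  shows "dual_norm_on Y g = dual_norm_on Y h"
  unfolding dual_norm_on_def using assms by (intro arg_cong[where f = Sup] image_cong) auto

lemma dual_norm_on_blinfun_le:
  assumes "0 \<in> Y"
  shows "dual_norm_on Y (blinfun_apply w) \<le> norm w"
  unfolding dual_norm_on_def
proof (rule cSup_least)
  show "(\<lambda>y. \<bar>w y\<bar>) ` {y \<in> Y. norm y \<le> 1} \<noteq> {}" using assms by auto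
next
  fix r assume "r \<in> (\<lambda>y. \<bar>w y\<bar>) ` {y \<in> Y. norm y \<le> 1}"
  then obtain y where "norm y \<le> 1" "r = \<bar>w y\<bar>" by auto
  moreover have "\<bar>w y\<bar> \<le> norm w * norm y" using norm_blinfun[of w y] by simp
  moreover have "norm w * norm y \<le> norm w" using \<open>norm y \<le> 1\<close> by (simp add: mult_left_le)
  ultimately show "r \<le> norm w" by linarith
qed

lemma bounded_functional_on_scale:
  assumes "bounded_functional_on Y g" "a \<in> Y"
  shows "g (c *\<^sub>R a) = c * g a"
  using assms unfolding bounded_functional_on_def by blast

lemma bdd_above_dual_norm_on:
  assumes "bounded_functional_on Y g"
  shows "bdd_above ((\<lambda>y. \<bar>g y\<bar>) ` {y \<in> Y. norm y \<le> 1})"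
proof -
  obtain K where K: "\<forall>y\<in>Y. \<bar>g y\<bar> \<le> K * norm y"
    using assms unfolding bounded_functional_on_def by blast
  show ?thesis
  proof (rule bdd_aboveI2)
    fix y assume "y \<in> {y \<in> Y. norm y \<le> 1}"
    then have "\<bar>g y\<bar> \<le> K * norm y" "norm y \<le> 1" using K by auto
    moreover have "K * norm y \<le> \<bar>K\<bar> * norm y" by (simp add: mult_right_mono)
    moreover have "\<bar>K\<bar> * norm y \<le> \<bar>K\<bar>" using \<open>norm y \<le> 1\<close> by (simp add: mult_left_le)
    ultimately show "\<bar>g y\<bar> \<le> \<bar>K\<bar>" by linarith
  qed
qed

lemma abs_le_dual_norm_on_unit:
  assumes "bounded_functional_on Y g" "u \<in> Y" "norm u \<le> 1"
  shows "\<bar>g u\<bar> \<le> dual_norm_on Y g"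
  unfolding dual_norm_on_def using assms bdd_above_dual_norm_on[OF assms(1)] by (intro cSup_upper) auto

lemma dual_norm_on_nonneg:
  assumes "0 \<in> Y" "bounded_functional_on Y g"
  shows "0 \<le> dual_norm_on Y g"
proof -
  have "\<bar>g 0\<bar> \<le> dual_norm_on Y g" using abs_le_dual_norm_on_unit[OF assms(2,1)] by simp
  then show ?thesis by (meson abs_ge_zero order_trans)
qed

lemma abs_le_dual_norm_on:
  assumes "subspace Y" "bounded_functional_on Y g" "y \<in> Y"
  shows "\<bar>g y\<bar> \<le> dual_norm_on Y g * norm y"
proof (cases "y = 0")
  case True
  have "g y = 0"
    using bounded_functional_on_scale[OF assms(2,3), of 0] True by simp
  then show ?thesis using dual_norm_on_nonneg[OF subspace_0[OF assms(1)] assms(2)] True by simp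
next
  case False
  define u where "u = inverse (norm y) *\<^sub>R y"
  have u: "u \<in> Y" "norm u = 1"
    using False assms(1,3) unfolding u_def by (auto simp: subspace_scale)
  have "y = norm y *\<^sub>R u" using False unfolding u_def by simp
  then have "g y = norm y * g u"
    using bounded_functional_on_scale[OF assms(2) u(1), of "norm y"] by simp
  then show ?thesis
    using abs_le_dual_norm_on_unit[OF assms(2) u(1)] u(2) by (simp add: abs_mult mult.commute mult_left_mono)
qed

lemma bounded_functional_on_norm_preserving_extension:
  fixes Y :: "'z::real_normed_vector set"
  assumes "subspace Y" "bounded_functional_on Y f"
  obtains F :: "'z \<Rightarrow>\<^sub>L real" where "\<And>y. y \<in> Y \<Longrightarrow> F y = f y" "norm F = dual_norm_on Y f"
proof -
  define K where "K = dual_norm_on Y f"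
  have "0 \<in> Y" using assms(1) by (rule subspace_0)
  then have "K \<ge> 0" unfolding K_def using assms(2) by (rule dual_norm_on_nonneg)
  have f_add: "\<And>a b. a \<in> Y \<Longrightarrow> b \<in> Y \<Longrightarrow> f (a + b) = f a + f b"
    and f_scale: "\<And>c a. a \<in> Y \<Longrightarrow> f (c *\<^sub>R a) = c * f a"
    using assms(2) unfolding bounded_functional_on_def by blast+
  have f_le: "f y \<le> K * norm y" if "y \<in> Y" for y
    using abs_le_dual_norm_on[OF assms that] unfolding K_def by linarith
  have p_add: "K * norm (x + y) \<le> K * norm x + K * norm y" for x y :: 'z
    using mult_left_mono[OF norm_triangle_ineq \<open>K \<ge> 0\<close>] by (simp add: distrib_left)
  have p_scale: "K * norm (t *\<^sub>R x) = t * (K * norm x)" if "0 < t" for t and x :: 'z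
    using that by simp
  obtain F where "linear F" and F_Y: "\<forall>y\<in>Y. F y = f y" and F_le: "\<forall>x. F x \<le> K * norm x"
    using hahn_banach_sublinear[OF assms(1) f_add f_scale f_le p_add p_scale] by blast
  have F_abs: "\<bar>F x\<bar> \<le> K * norm x" for x
    using F_le[rule_format, of x] F_le[rule_format, of "- x"] linear_neg[OF \<open>linear F\<close>, of x]
    by (simp add: abs_le_iff)
  have "bounded_linear F"
    using \<open>linear F\<close> F_abs
    by (intro bounded_linear_intro[of _ K]) (auto simp: linear_add linear_scale mult.commute)
  then have F_apply: "blinfun_apply (Blinfun F) = F" by (rule bounded_linear_Blinfun_apply)
  show thesis
  proof
    show "Blinfun F y = f y" if "y \<in> Y" for y using F_Y that by (simp add: F_apply)
    have "norm (Blinfun F) \<le> K"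
      using \<open>K \<ge> 0\<close> F_abs by (intro norm_blinfun_bound) (simp_all add: F_apply)
    moreover have "K \<le> norm (Blinfun F)"
      using dual_norm_on_blinfun_le[OF \<open>0 \<in> Y\<close>, of "Blinfun F"] dual_norm_on_cong[of Y "Blinfun F" f] F_Y
      unfolding K_def by (simp add: F_apply)
    ultimately show "norm (Blinfun F) = dual_norm_on Y f" unfolding K_def by linarith
  qed
qed

lemma property_SU_projection:
  fixes Y :: "'z::real_normed_vector set"
  assumes "property_SU Y"
  obtains Q :: "('z \<Rightarrow>\<^sub>L real) \<Rightarrow>\<^sub>L ('z \<Rightarrow>\<^sub>L real)"
  where "\<And>w y. y \<in> Y \<Longrightarrow> Q w y = w y"
    and "\<And>h. h \<in> annihilator Y \<Longrightarrow> Q h = 0"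
    and "\<And>w. Q w \<noteq> w \<Longrightarrow> norm (Q w) < norm w"
proof -
  obtain P :: "('z \<Rightarrow>\<^sub>L real) \<Rightarrow>\<^sub>L ('z \<Rightarrow>\<^sub>L real)" where
    P_idem: "\<forall>w. P (P w) = P w"
    and P_range: "range P = annihilator Y"
    and SU: "\<forall>g \<in> range (\<lambda>w. w - P w). \<forall>h \<in> annihilator Y. h \<noteq> 0 \<longrightarrow> norm (g + h) > norm g"
    using assms unfolding property_SU_def by (elim exE conjE)
  define Q where "Q = id_blinfun - P"
  have Q_apply: "Q w = w - P w" for w unfolding Q_def by (simp add: blinfun.diff_left)
  have P_ann: "P w \<in> annihilator Y" for w using P_range by blast
  show thesis
  proof
    show "Q w y = w y" if "y \<in> Y" for w y
      using P_ann[of w] that by (simp add: Q_apply annihilator_def blinfun.diff_left)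
  next
    fix h assume "h \<in> annihilator Y"
    then obtain w where "h = P w" using P_range by blast
    then show "Q h = 0" using P_idem by (simp add: Q_apply)
  next
    fix w assume "Q w \<noteq> w"
    then have "P w \<noteq> 0" by (simp add: Q_apply)
    moreover have "w - P w \<in> range (\<lambda>w. w - P w)" by blast
    ultimately have "norm (w - P w) < norm (w - P w + P w)" using SU P_ann by blast
    then have "norm (Q w) < norm (Q w + P w)" by (simp add: Q_apply)
    then show "norm (Q w) < norm w" by (simp add: Q_apply)
  qed
qed

lemma property_SU_norm_preserving_extension_unique:
  fixes Y :: "'z::real_normed_vector set" and w1 w2 :: "'z \<Rightarrow>\<^sub>L real"
  assumes "subspace Y" "property_SU Y"
    and "\<And>y. y \<in> Y \<Longrightarrow> w1 y = w2 y"
    and "norm w1 \<le> dual_norm_on Y w1" "norm w2 \<le> dual_norm_on Y w2"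
  shows "w1 = w2"
proof -
  obtain Q :: "('z \<Rightarrow>\<^sub>L real) \<Rightarrow>\<^sub>L ('z \<Rightarrow>\<^sub>L real)"
    where Q_Y: "\<And>w y. y \<in> Y \<Longrightarrow> Q w y = w y"
      and Q_ann: "\<And>h. h \<in> annihilator Y \<Longrightarrow> Q h = 0"
      and Q_strict: "\<And>w. Q w \<noteq> w \<Longrightarrow> norm (Q w) < norm w"
    using property_SU_projection[OF assms(2)] by blast
  have "0 \<in> Y" using assms(1) by (rule subspace_0)
  have Q_fixes: "Q w = w" if "norm w \<le> dual_norm_on Y w" for w :: "'z \<Rightarrow>\<^sub>L real"
  proof (rule ccontr)
    assume "Q w \<noteq> w"
    then have "norm (Q w) < norm w" by (rule Q_strict)
    moreover have "dual_norm_on Y w = dual_norm_on Y (Q w)"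
      using Q_Y by (intro dual_norm_on_cong) simp
    moreover have "dual_norm_on Y (Q w) \<le> norm (Q w)"
      using \<open>0 \<in> Y\<close> by (rule dual_norm_on_blinfun_le)
    ultimately show False using that by linarith
  qed
  have "w1 - w2 \<in> annihilator Y" using assms(3) by (simp add: annihilator_def blinfun.diff_left)
  then have "Q (w1 - w2) = 0" by (rule Q_ann)
  then have "Q w1 = Q w2" by (simp add: blinfun.diff_right)
  then show ?thesis using Q_fixes assms(4,5) by simp
qed

lemma property_SU_extension_operator_unique:
  fixes Y :: "'z::real_normed_vector set" and T1 T2 :: "'x::real_normed_vector \<Rightarrow>\<^sub>L ('z \<Rightarrow>\<^sub>L real)"
  assumes "subspace Y" "property_SU Y"
    and "\<And>x y. y \<in> Y \<Longrightarrow> T1 x y = T2 x y"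
    and "\<And>x. norm (T1 x) \<le> dual_norm_on Y (T1 x)" "\<And>x. norm (T2 x) \<le> dual_norm_on Y (T2 x)"
  shows "T1 = T2"
  using property_SU_norm_preserving_extension_unique[OF assms(1,2)] assms(3-5) by (intro blinfun_eqI) metis

lemma linear_annihilator_kernel_comp:
  fixes Q :: "('z::real_normed_vector \<Rightarrow>\<^sub>L real) \<Rightarrow>\<^sub>L ('z \<Rightarrow>\<^sub>L real)"
    and E :: "'x::real_vector \<Rightarrow> 'z \<Rightarrow>\<^sub>L real"
  assumes Q_ann: "\<And>h. h \<in> annihilator Y \<Longrightarrow> Q h = 0"
    and E_Y: "\<And>x y. y \<in> Y \<Longrightarrow> E x y = S x y"
    and S_add: "\<And>x1 x2 y. y \<in> Y \<Longrightarrow> S (x1 + x2) y = S x1 y + S x2 y"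
    and S_scale: "\<And>c x y. y \<in> Y \<Longrightarrow> S (c *\<^sub>R x) y = c * S x y"
  shows "linear (\<lambda>x. Q (E x))"
proof (rule linearI)
  fix x1 x2
  have "E (x1 + x2) - E x1 - E x2 \<in> annihilator Y"
    by (simp add: annihilator_def blinfun.diff_left E_Y S_add)
  then have "Q (E (x1 + x2) - E x1 - E x2) = 0" by (rule Q_ann)
  then show "Q (E (x1 + x2)) = Q (E x1) + Q (E x2)"
    by (simp add: blinfun.diff_right blinfun.add_right algebra_simps)
next
  fix c x
  have "E (c *\<^sub>R x) - c *\<^sub>R E x \<in> annihilator Y"
    by (simp add: annihilator_def blinfun.diff_left blinfun.scaleR_left E_Y S_scale)
  then have "Q (E (c *\<^sub>R x) - c *\<^sub>R E x) = 0" by (rule Q_ann)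
  then show "Q (E (c *\<^sub>R x)) = c *\<^sub>R Q (E x)"
    by (simp add: blinfun.diff_right blinfun.scaleR_right)
qed

lemma property_SU_extension_operator:
  fixes Y :: "'z::real_normed_vector set" and S :: "'x::real_normed_vector \<Rightarrow> 'z \<Rightarrow> real"
  assumes "subspace Y" "property_SU Y" "bounded_op_to_dual_on Y S"
  obtains T :: "'x \<Rightarrow>\<^sub>L ('z \<Rightarrow>\<^sub>L real)"
  where "\<And>x y. y \<in> Y \<Longrightarrow> T x y = S x y" and "\<And>x. norm (T x) = dual_norm_on Y (S x)"
proof -
  obtain Q :: "('z \<Rightarrow>\<^sub>L real) \<Rightarrow>\<^sub>L ('z \<Rightarrow>\<^sub>L real)"
    where Q_Y: "\<And>w y. y \<in> Y \<Longrightarrow> Q w y = w y"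
      and Q_ann: "\<And>h. h \<in> annihilator Y \<Longrightarrow> Q h = 0"
      and Q_strict: "\<And>w. Q w \<noteq> w \<Longrightarrow> norm (Q w) < norm w"
    using property_SU_projection[OF assms(2)] by blast
  have Q_le: "norm (Q w) \<le> norm w" for w
    using Q_strict[of w] by (cases "Q w = w") auto
  have S_fun: "\<And>x. bounded_functional_on Y (S x)"
    and S_add: "\<And>x1 x2 y. y \<in> Y \<Longrightarrow> S (x1 + x2) y = S x1 y + S x2 y"
    and S_scale: "\<And>c x y. y \<in> Y \<Longrightarrow> S (c *\<^sub>R x) y = c * S x y"
    using assms(3) unfolding bounded_op_to_dual_on_def by blast+
  obtain K where S_bd: "\<And>x. dual_norm_on Y (S x) \<le> K * norm x"
    using assms(3) unfolding bounded_op_to_dual_on_def by blast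
  have "\<exists>F. (\<forall>y\<in>Y. blinfun_apply F y = S x y) \<and> norm F = dual_norm_on Y (S x)" for x
    using bounded_functional_on_norm_preserving_extension[OF assms(1) S_fun] by metis
  then obtain E :: "'x \<Rightarrow> 'z \<Rightarrow>\<^sub>L real" where E_Y: "\<And>x y. y \<in> Y \<Longrightarrow> E x y = S x y"
    and E_norm: "\<And>x. norm (E x) = dual_norm_on Y (S x)"
    by metis
  define T where "T x = Q (E x)" for x
  have T_Y: "T x y = S x y" if "y \<in> Y" for x y
    using that by (simp add: T_def Q_Y E_Y)
  have T_norm: "norm (T x) = dual_norm_on Y (S x)" for x
  proof (rule antisym)
    show "norm (T x) \<le> dual_norm_on Y (S x)" using Q_le[of "E x"] E_norm[of x] by (simp add: T_def)
    have "dual_norm_on Y (S x) = dual_norm_on Y (T x)" using T_Y by (intro dual_norm_on_cong) simp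
    also have "\<dots> \<le> norm (T x)" using subspace_0[OF assms(1)] by (rule dual_norm_on_blinfun_le)
    finally show "dual_norm_on Y (S x) \<le> norm (T x)" .
  qed
  have "linear T"
    unfolding T_def using Q_ann E_Y S_add S_scale by (rule linear_annihilator_kernel_comp)
  then have "bounded_linear T"
    using S_bd T_norm by (intro bounded_linear_intro[of _ K]) (simp_all add: linear_add linear_scale mult.commute)
  then have T_apply: "blinfun_apply (Blinfun T) = T" by (rule bounded_linear_Blinfun_apply)
  show thesis
    by (rule that[of "Blinfun T"]) (simp_all add: T_apply T_Y T_norm)
qed

lemma Sup_norm_unit_ball:
  "Sup (norm ` {x::'a::real_normed_vector. norm x \<le> 1}) = (if \<exists>x::'a. x \<noteq> 0 then 1 else 0)"
proof (cases "\<exists>x::'a. x \<noteq> 0")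
  case True
  then obtain x :: 'a where "x \<noteq> 0" by blast
  then have "norm (inverse (norm x) *\<^sub>R x) = 1" by simp
  then have "Sup (norm ` {x::'a. norm x \<le> 1}) = 1"
    by (intro cSup_eq_maximum) (auto intro!: image_eqI[of _ _ "inverse (norm x) *\<^sub>R x"])
  then show ?thesis using True by simp
next
  case False
  then have "{x::'a. norm x \<le> 1} = {0}" by auto
  then show ?thesis using False by simp
qed

lemma norm_blinfun_isometric:
  fixes T :: "'a::real_normed_vector \<Rightarrow>\<^sub>L 'b::real_normed_vector"
  assumes "\<And>x. norm (T x) = norm x"
  shows "norm T = (if \<exists>x::'a. x \<noteq> 0 then 1 else 0)"
proof (cases "\<exists>x::'a. x \<noteq> 0")
  case True
  then obtain x :: 'a where "x \<noteq> 0" by blast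
  define u where "u = inverse (norm x) *\<^sub>R x"
  have "norm u = 1" using \<open>x \<noteq> 0\<close> by (simp add: u_def)
  have "norm T \<le> 1" using assms by (intro norm_blinfun_bound) simp_all
  moreover have "1 \<le> norm T"
    using norm_blinfun[of T u] assms[of u] \<open>norm u = 1\<close> by simp
  ultimately show ?thesis using True by simp
next
  case False
  then have "T x = 0" for x by (metis blinfun.zero_right)
  then have "norm T \<le> 0" by (intro norm_blinfun_bound) simp_all
  then show ?thesis using False by simp
qed

theorem theorem3p8:
  fixes Y :: "'z::banach set" and S :: "'x::banach \<Rightarrow> 'z \<Rightarrow> real"
  assumes "subspace Y" and "closed Y"
    and "property_SU Y"
    and "bounded_op_to_dual_on Y S"
    and "\<forall>x. dual_norm_on Y (S x) = norm x"
  shows "\<exists>!T :: 'x \<Rightarrow>\<^sub>L ('z \<Rightarrow>\<^sub>L real).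
           norm T = op_norm_to_dual_on Y S \<and> (\<forall>x. \<forall>y\<in>Y. blinfun_apply (blinfun_apply T x) y = S x y)"
proof -
  have op_norm: "op_norm_to_dual_on Y S = (if \<exists>x::'x. x \<noteq> 0 then 1 else 0)"
    using assms(5) by (simp add: op_norm_to_dual_on_def Sup_norm_unit_ball)
  obtain T :: "'x \<Rightarrow>\<^sub>L ('z \<Rightarrow>\<^sub>L real)"
    where T_Y: "\<And>x y. y \<in> Y \<Longrightarrow> T x y = S x y" and T_norm: "\<And>x. norm (T x) = norm x"
    using property_SU_extension_operator[OF assms(1,3,4)] assms(5) by metis
  have norm_T: "norm T = op_norm_to_dual_on Y S"
    using norm_blinfun_isometric[OF T_norm] op_norm by simp
  have preserving: "norm (U x) \<le> dual_norm_on Y (U x)"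
    if "norm U \<le> 1" "\<forall>x. \<forall>y\<in>Y. U x y = S x y" for U :: "'x \<Rightarrow>\<^sub>L ('z \<Rightarrow>\<^sub>L real)" and x
  proof -
    have "norm (U x) \<le> norm x"
      using norm_blinfun[of U x] mult_right_mono[OF \<open>norm U \<le> 1\<close> norm_ge_zero[of x]] by simp
    also have "\<dots> = dual_norm_on Y (U x)"
      using assms(5) that(2) by (metis dual_norm_on_cong)
    finally show ?thesis .
  qed
  show ?thesis
  proof (rule ex1I)
    show "norm T = op_norm_to_dual_on Y S \<and> (\<forall>x. \<forall>y\<in>Y. T x y = S x y)"
      using norm_T T_Y by simp
  next
    fix T' :: "'x \<Rightarrow>\<^sub>L ('z \<Rightarrow>\<^sub>L real)"
    assume T': "norm T' = op_norm_to_dual_on Y S \<and> (\<forall>x. \<forall>y\<in>Y. T' x y = S x y)"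
    have "norm T' \<le> 1" "norm T \<le> 1" using T' norm_T op_norm by simp_all
    then show "T' = T"
      using T' T_Y preserving
      by (intro property_SU_extension_operator_unique[OF assms(1,3)]) simp_all
  qed
qed

end
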